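(* Let $\Sigma=\{0,1\}$ and let $w\in\Sigma^+\setminus\Sigma^*11\Sigma^*$ with $|w|=k\ge1$. Then (1) $w\in0\Sigma^*$ if and only if $0\le\mathrm{val}_{\mathcal{F}c}(w)<F_{k-1}$; (2) $w\in1\Sigma^*$ if and only if $-F_{k-2}\le\mathrm{val}_{\mathcal{F}c}(w)<0$.
   Context: Fibonacci numbers: $F_0=1$, $F_1=2$, $F_n=F_{n-1}+F_{n-2}$ for $n\ge2$, extended to negative indices by the same recurrence ($F_{-1}=1$, $F_{-2}=0$). For a nonempty binary word $w=w_{k-1}\cdots w_0$ (digits indexed from the right), $\mathrm{val}_{\mathcal{F}c}(w)=\sum_{i=0}^{k-1}w_iF_i-w_{k-1}F_k$. *)

theory Defs
  imports Main
begin

(* G m = F_(m-2): G 0 = F_(-2) = 0, G 1 = F_(-1) = 1, G 2 = F_0 = 1, G 3 = F_1 = 2 *)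
fun fibG :: "nat \<Rightarrow> int" where
  "fibG 0 = 0"
| "fibG (Suc 0) = 1"
| "fibG (Suc (Suc m)) = fibG (Suc m) + fibG m"

(* Fibonacci numbers F_n with F_0 = 1, F_1 = 2, extended to n >= -2 *)
definition Fib :: "int \<Rightarrow> int" where
  "Fib n = fibG (nat (n + 2))"

(* a word w = w_(k-1) ... w_0 is a list written left to right, so hd w = w_(k-1)
   and the digit w_i is w ! (length w - 1 - i) *)
definition digit :: "nat list \<Rightarrow> nat \<Rightarrow> nat" where
  "digit w i = w ! (length w - 1 - i)"

definition valFc :: "nat list \<Rightarrow> int" where
  "valFc w = (\<Sum>i<length w. int (digit w i) * Fib (int i))
             - int (digit w (length w - 1)) * Fib (int (length w))"

definition has11 :: "nat list \<Rightarrow> bool" where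
  "has11 w \<longleftrightarrow> (\<exists>u v. w = u @ [1, 1] @ v)"

end

theory Submission
  imports Defs
begin

text \<open>
  Writing \<open>w = a t\<close>, the leading digit contributes \<open>a F\<^sub>k\<^sub>-\<^sub>1 - a F\<^sub>k = -a F\<^sub>k\<^sub>-\<^sub>2\<close>, so
  \<open>val\<^sub>F\<^sub>c(w) = val\<^sub>F(t) - a F\<^sub>k\<^sub>-\<^sub>2\<close> with the ordinary Fibonacci value \<open>val\<^sub>F\<close>. A word of
  length \<open>n\<close> without factor 11 has \<open>0 \<le> val\<^sub>F < F\<^sub>n\<close>, and if it may follow a 1 (so it
  starts with 0 or is empty) even \<open>val\<^sub>F < F\<^sub>n\<^sub>-\<^sub>1\<close>. The two cases \<open>a = 0\<close> and \<open>a = 1\<close>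
  therefore land in the disjoint intervals \<open>[0, F\<^sub>k\<^sub>-\<^sub>1)\<close> and \<open>[-F\<^sub>k\<^sub>-\<^sub>2, 0)\<close>.
\<close>

lemma fibG_nonneg: "fibG n \<ge> 0"
  by (induction n rule: fibG.induct) auto

lemma has11_Nil [simp]: "\<not> has11 []"
  and has11_singleton [simp]: "\<not> has11 [a]"
  unfolding has11_def by auto

lemma has11_Cons_Cons [simp]: "has11 (a # b # t) \<longleftrightarrow> a = 1 \<and> b = 1 \<or> has11 (b # t)"
  unfolding has11_def by (auto simp: Cons_eq_append_conv)

lemma not_has11_ConsD: "\<not> has11 (a # t) \<Longrightarrow> \<not> has11 t"
  by (cases t) auto

fun valF :: "nat list \<Rightarrow> int" where
  "valF [] = 0"
| "valF (a # t) = int a * fibG (length t + 2) + valF t"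

lemma sum_digit_Fib_eq_valF: "(\<Sum>i<length w. int (digit w i) * Fib (int i)) = valF w"
proof (induction w)
  case Nil
  then show ?case by simp
next
  case (Cons a t)
  have digit_Cons: "digit (a # t) i = digit t i" if "i < length t" for i
    using that by (simp add: digit_def Suc_diff_Suc)
  have "(\<Sum>i<length (a # t). int (digit (a # t) i) * Fib (int i))
      = (\<Sum>i<length t. int (digit t i) * Fib (int i)) + int a * Fib (int (length t))"
    by (simp add: digit_Cons digit_def)
  then show ?case
    using Cons by (simp add: Fib_def nat_add_distrib)
qed

lemma valFc_Cons: "valFc (a # t) = valF t - int a * fibG (length t + 1)"
proof -
  have "valFc (a # t) = valF (a # t) - int a * fibG (length t + 3)"
    unfolding valFc_def sum_digit_Fib_eq_valF
    by (simp add: digit_def Fib_def nat_add_distrib add.commute)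
  then show ?thesis
    by (simp add: numeral_eq_Suc algebra_simps)
qed

lemma valF_bounds:
  assumes "set w \<subseteq> {0, 1}" and "\<not> has11 w"
  shows "0 \<le> valF w \<and> valF w < fibG (length w + 2)"
  using assms
proof (induction w rule: induct_list012)
  case (3 a b t)
  consider "a = 0" | "a = 1" "b = 0"
    using "3.prems" by auto
  then show ?case
  proof cases
    case 1
    then show ?thesis
      using "3.IH"(2) "3.prems" fibG_nonneg[of "length t"] by simp
  next
    case 2
    then show ?thesis
      using "3.IH"(1) "3.prems" fibG_nonneg[of "length t + 3"]
      by (simp add: numeral_eq_Suc not_has11_ConsD)
  qed
qed (auto simp: numeral_eq_Suc)

lemma valF_bounds_after_one:
  assumes "set t \<subseteq> {0, 1}" and "\<not> has11 (1 # t)"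
  shows "0 \<le> valF t \<and> valF t < fibG (length t + 1)"
proof (cases t)
  case (Cons b u)
  then have "b = 0" "set u \<subseteq> {0, 1}" "\<not> has11 u"
    using assms by (auto dest: not_has11_ConsD)
  then show ?thesis
    using valF_bounds[of u] Cons by simp
qed simp

theorem lemma6p4:
  fixes w :: "nat list" and k :: nat
  assumes "set w \<subseteq> {0, 1}"
    and "\<not> has11 w"
    and "length w = k" and "k \<ge> 1"
  shows "(hd w = 0 \<longleftrightarrow> 0 \<le> valFc w \<and> valFc w < Fib (int k - 1))
       \<and> (hd w = 1 \<longleftrightarrow> - Fib (int k - 2) \<le> valFc w \<and> valFc w < 0)"
proof -
  obtain a t where w: "w = a # t" and k: "k = length t + 1"
    using assms(3,4) by (cases w) auto
  have Fibs: "Fib (int k - 1) = fibG (length t + 2)" "Fib (int k - 2) = fibG (length t + 1)"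
    using k by (simp_all add: Fib_def nat_add_distrib)
  have t: "set t \<subseteq> {0, 1}" "\<not> has11 t"
    using assms(1,2) w by (auto dest: not_has11_ConsD)
  consider "a = 0" | "a = 1"
    using assms(1) w by auto
  then show ?thesis
  proof cases
    case 1
    then show ?thesis
      using valF_bounds[OF t] w Fibs by (simp add: valFc_Cons)
  next
    case 2
    then show ?thesis
      using valF_bounds_after_one[of t] assms(2) t(1) w Fibs by (simp add: valFc_Cons)
  qed
qed

end
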